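(* Let $a\ge2$, $d\ge1$ and $s$ be integers with $\gcd(a,d)=1$ and $1\le s<a$, and put $b=a+sd$. Let $\mathit{NR}$ be the set of positive integers not representable as $\sum_{i=0}^s(a+id)x_i$ with $x_0,\dots,x_s$ nonnegative integers, and let $S_m=\sum_{n\in\mathit{NR}}n^m$. Then for every integer $m\ge2$, \[ m(m-1)S_{m-2}=\sum_{j=0}^m\binom{m}{j}d^{m-j-1}B_{m-j}a^{j-1}\phi_j\!\left(\lceil (b-1)/s\rceil\right)+\sum_{j=0}^m\binom{m}{j}(-d)^{m-j-1}B_{m-j}b^{j-1}\phi_j\!\left(\lceil (a-1)/s\rceil\right)-mB_{m-1}, \] and for every integer $m\ge1$, \[ S_{m-1}=\frac{1}{m(m+1)}\sum_{j=0}^{m}\sum_{i=0}^{j}\binom{m+1}{j+1}\binom{j+1}{i+1}d^{m-j-1}B_{m-j}B_{j-i}a^{j}\left\lceil\frac{b-1}{s}\right\rceil^{i+1} +\frac{1}{m(m+1)}\sum_{j=0}^{m}\sum_{i=0}^{j}\binom{m+1}{j+1}\binom{j+1}{i+1}(-d)^{m-j-1}B_{m-j}B_{j-i}b^{j}\left\lceil\frac{a-1}{s}\right\rceil^{i+1}-\frac1mB_m . \]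
   Context: $B_m(x)$ denotes the Bernoulli polynomials, defined by $\frac{te^{tx}}{e^t-1}=\sum_{m\ge0}B_m(x)\frac{t^m}{m!}$; $B_m=B_m(0)$ are the Bernoulli numbers; $\phi_j(x)=B_j(x)-B_j$ (so $\phi_0=0$, and terms containing the factor $\phi_0$ are zero). $\lceil x\rceil$ is the least integer not less than $x$. *)

theory Defs
  imports Complex_Main "HOL-Computational_Algebra.Formal_Power_Series"
begin

definition bernpoly :: "nat \<Rightarrow> real \<Rightarrow> real" where
  "bernpoly m x = fact m * fps_nth (fps_X * fps_exp x / (fps_exp 1 - 1)) m"

definition bernoulli :: "nat \<Rightarrow> real" where
  "bernoulli m = bernpoly m 0"

definition phi :: "nat \<Rightarrow> real \<Rightarrow> real" where
  "phi j x = bernpoly j x - bernoulli j"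

definition NR :: "nat \<Rightarrow> nat \<Rightarrow> nat \<Rightarrow> nat set" where
  "NR a d s = {n. 0 < n \<and> \<not> (\<exists>x :: nat \<Rightarrow> nat. n = (\<Sum>i\<le>s. (a + i * d) * x i))}"

definition Ssum :: "nat \<Rightarrow> nat \<Rightarrow> nat \<Rightarrow> nat \<Rightarrow> real" where
  "Ssum a d s m = (\<Sum>n\<in>NR a d s. real n ^ m)"

end

(*
  A sum of exactly k of the generators a + i d (0 <= i <= s) has the form k a + t d with
  0 <= t <= k s, so the representable numbers are the union of these "layers".  Since a and d
  are coprime, the layers k, k + d, k + 2 d, ... lie in one residue class modulo d.  With
  N = ceil((a - 1) / s), consecutive layers of a class overlap from k = N on, while the layers
  below N leave gaps.  Hence NR consists, for every k in [N, N + d), of the numbers below k a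
  congruent to k a, with the layers k < N removed.  Power sums over these arithmetic
  progressions telescope into Bernoulli polynomials; the multiplication theorem
  sum_{r<d} B_n(r/d) = d^(1-n) B_n disposes of the residues, the reflection
  B_n(-x) = (-1)^n B_n(x + 1) turns the second sum around, and expanding B_n(x) in powers of x
  rewrites both sums in terms of phi_j.  The second formula is the first one for m + 1 with
  phi_(j+1) expanded.
*)

theory Submission
  imports Defs "HOL-Number_Theory.Cong"
begin

section \<open>Bernoulli polynomials\<close>

definition bernpoly_fps :: "real \<Rightarrow> real fps" where
  "bernpoly_fps x = fps_X * fps_exp x / (fps_exp 1 - 1)"

lemma bernpoly_eq_fps_nth: "bernpoly m x = fact m * fps_nth (bernpoly_fps x) m"
  by (simp add: bernpoly_def bernpoly_fps_def)

lemma fps_exp_1_minus_1_neq_0: "fps_exp (1::real) - 1 \<noteq> 0"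
proof
  assume "fps_exp (1::real) - 1 = 0"
  then have "fps_nth (fps_exp (1::real) - 1) 1 = 0" by simp
  then show False by simp
qed

lemma bernpoly_fps_times_denom: "bernpoly_fps x * (fps_exp 1 - 1) = fps_X * fps_exp x"
proof -
  have "subdegree (fps_X * fps_exp x) = 1"
    by (simp add: fps_subdegree_mult_fps_X subdegree_eq_0_iff)
  moreover have "subdegree (fps_exp (1::real) - 1) = 1"
    by (rule subdegreeI) auto
  ultimately show ?thesis
    unfolding bernpoly_fps_def by (intro fps_times_divide_eq fps_exp_1_minus_1_neq_0) simp
qed

lemma bernpoly_fps_eqI: "f * (fps_exp 1 - 1) = fps_X * fps_exp x \<Longrightarrow> f = bernpoly_fps x"
  using bernpoly_fps_times_denom[of x] fps_exp_1_minus_1_neq_0 by (metis mult_right_cancel)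

lemma bernpoly_fps_plus_1: "bernpoly_fps (x + 1) = bernpoly_fps x + fps_X * fps_exp x"
proof (rule sym, rule bernpoly_fps_eqI)
  have "(bernpoly_fps x + fps_X * fps_exp x) * (fps_exp 1 - 1)
      = fps_X * fps_exp x + fps_X * fps_exp x * (fps_exp 1 - 1)"
    by (simp add: distrib_right bernpoly_fps_times_denom)
  also have "\<dots> = fps_X * fps_exp (x + 1)"
    by (simp add: algebra_simps fps_exp_add_mult)
  finally show "(bernpoly_fps x + fps_X * fps_exp x) * (fps_exp 1 - 1) = fps_X * fps_exp (x + 1)" .
qed

lemma bernpoly_plus_1: "bernpoly n (x + 1) - bernpoly n x = of_nat n * x ^ (n - 1)"
proof -
  have "bernpoly n (x + 1) - bernpoly n x = fact n * fps_nth (fps_X * fps_exp x) n"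
    by (simp only: bernpoly_eq_fps_nth bernpoly_fps_plus_1 fps_add_nth distrib_left
        add_diff_cancel_left')
  also have "\<dots> = of_nat n * x ^ (n - 1)"
    by (cases n) (simp_all add: fps_X_mult_nth fact_Suc field_simps)
  finally show ?thesis .
qed

lemma bernpoly_fps_eq_exp_times: "bernpoly_fps x = fps_exp x * bernpoly_fps 0"
  by (rule sym, rule bernpoly_fps_eqI) (simp add: mult.assoc bernpoly_fps_times_denom mult.commute)

lemma bernpoly_expand:
  "bernpoly n x = (\<Sum>i=0..n. real (n choose i) * bernoulli (n - i) * x ^ i)"
proof -
  have "bernpoly n x = (\<Sum>i=0..n. fact n * (x ^ i / fact i * fps_nth (bernpoly_fps 0) (n - i)))"
    by (simp add: bernpoly_eq_fps_nth bernpoly_fps_eq_exp_times[of x] fps_mult_nth sum_distrib_left)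
  also have "\<dots> = (\<Sum>i=0..n. real (n choose i) * bernoulli (n - i) * x ^ i)"
    by (intro sum.cong refl)
       (simp add: bernoulli_def bernpoly_eq_fps_nth binomial_fact field_simps)
  finally show ?thesis .
qed

lemma bernpoly_fps_compose_uminus:
  "bernpoly_fps x oo (fps_const (-1) * fps_X) = bernpoly_fps (1 - x)"
proof (rule bernpoly_fps_eqI)
  let ?f = "bernpoly_fps x oo (fps_const (-1) * fps_X)"
  have h0: "fps_nth (fps_const (-1::real) * fps_X) 0 = 0"
    by simp
  have reflected: "?f * (fps_exp (-1) - 1) = fps_const (-1) * fps_X * fps_exp (- x)"
    using arg_cong[OF bernpoly_fps_times_denom[of x], of "\<lambda>f. f oo (fps_const (-1) * fps_X)"]
    by (simp add: fps_compose_sub_distrib fps_compose_mult_distrib[OF h0]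
        fps_X_fps_compose_startby0[OF h0] fps_compose_1)
  have "?f * (fps_exp 1 - 1) = - (?f * (fps_exp (-1) - 1) * fps_exp 1)"
    by (simp add: algebra_simps flip: fps_exp_add_mult)
  also have "\<dots> = - (fps_const (-1) * fps_X * fps_exp (- x) * fps_exp 1)"
    by (simp only: reflected)
  also have "\<dots> = fps_X * (fps_exp (- x) * fps_exp 1)"
    by (simp add: mult.assoc flip: fps_const_neg)
  also have "\<dots> = fps_X * fps_exp (1 - x)"
    by (simp flip: fps_exp_add_mult)
  finally show "?f * (fps_exp 1 - 1) = fps_X * fps_exp (1 - x)" .
qed

lemma bernpoly_uminus: "bernpoly n (- x) = (-1) ^ n * bernpoly n (x + 1)"
  using arg_cong[OF bernpoly_fps_compose_uminus[of "x + 1"], of "\<lambda>f. fps_nth f n"]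
  by (simp add: bernpoly_eq_fps_nth)

lemma bernpoly_multiplication:
  assumes "d > (0::nat)"
  shows "(\<Sum>r<d. bernpoly n (real r / real d)) = real d * (1 / real d) ^ n * bernoulli n"
proof -
  define c where "c = 1 / real d"
  define E where "E = fps_exp c"
  define S where "S = (\<Sum>r<d. E ^ r)"
  define G where "G = (\<Sum>r<d. bernpoly_fps (real r / real d))"
  define h where "h = fps_const c * fps_X"
  define H where "H = fps_const (real d) * (bernpoly_fps 0 oo h)"
  have dc: "real d * c = 1"
    using assms by (simp add: c_def)
  have h0: "fps_nth h 0 = 0"
    by (simp add: h_def)
  have "G * (fps_exp 1 - 1) = fps_X * S"
    by (simp add: G_def S_def E_def c_def sum_distrib_right sum_distrib_left
        bernpoly_fps_times_denom fps_exp_power_mult)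
  moreover have "H * (fps_exp 1 - 1) = fps_X * S"
  proof -
    have "E ^ d = fps_exp 1"
      using dc by (simp add: E_def fps_exp_power_mult)
    then have denom: "fps_exp 1 - 1 = (E - 1) * S"
      unfolding S_def by (simp flip: power_diff_1_eq)
    have "(bernpoly_fps 0 oo h) * (fps_exp 1 - 1 oo h) = fps_X oo h"
      by (simp flip: fps_compose_mult_distrib[OF h0] add: bernpoly_fps_times_denom)
    moreover have "fps_exp 1 - 1 oo h = E - 1"
      by (simp add: fps_compose_sub_distrib fps_compose_1 E_def h_def)
    ultimately have "H * (E - 1) = fps_const (real d) * h"
      by (simp add: H_def mult.assoc fps_X_fps_compose_startby0[OF h0])
    also have "\<dots> = fps_X"
      using dc by (simp add: h_def fps_const_mult flip: mult.assoc)
    finally show ?thesis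
      by (simp add: denom mult.assoc)
  qed
  ultimately have "G = H"
    using fps_exp_1_minus_1_neq_0 by (metis mult_right_cancel)
  have "(\<Sum>r<d. bernpoly n (real r / real d)) = fact n * fps_nth G n"
    by (simp add: G_def bernpoly_eq_fps_nth fps_sum_nth sum_distrib_left)
  also have "\<dots> = real d * c ^ n * bernoulli n"
    by (simp add: \<open>G = H\<close> H_def h_def bernoulli_def bernpoly_eq_fps_nth)
  finally show ?thesis
    by (simp add: c_def)
qed

lemma sum_power_arith_progression:
  fixes r d :: real
  assumes "d \<noteq> 0"
  shows "real (Suc q) * (\<Sum>t<T. (r + real t * d) ^ q)
    = d ^ q * (bernpoly (Suc q) (r / d + real T) - bernpoly (Suc q) (r / d))"
proof -
  have "real (Suc q) * (r + real t * d) ^ q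
      = d ^ q * (bernpoly (Suc q) (r / d + real (Suc t)) - bernpoly (Suc q) (r / d + real t))" for t
  proof -
    have "r + real t * d = d * (r / d + real t)"
      using assms by (simp add: field_simps)
    moreover have "r / d + real (Suc t) = (r / d + real t) + 1"
      by simp
    ultimately show ?thesis
      using bernpoly_plus_1[of "Suc q" "r / d + real t"] by (simp only: power_mult_distrib) simp
  qed
  then have "real (Suc q) * (\<Sum>t<T. (r + real t * d) ^ q) = d ^ q *
      (\<Sum>t<T. bernpoly (Suc q) (r / d + real (Suc t)) - bernpoly (Suc q) (r / d + real t))"
    by (simp only: sum_distrib_left)
  then show ?thesis
    using sum_lessThan_telescope[of "\<lambda>t. bernpoly (Suc q) (r / d + real t)" T] by simp
qed

lemma phi_of_nat: "phi j (real M) = (\<Sum>k<M. real j * real k ^ (j - 1))"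
proof -
  have "phi j (real M) = (\<Sum>k<M. bernpoly j (real (Suc k)) - bernpoly j (real k))"
    using sum_lessThan_telescope[of "\<lambda>k. bernpoly j (real k)" M]
    by (simp add: phi_def bernoulli_def)
  also have "\<dots> = (\<Sum>k<M. real j * real k ^ (j - 1))"
  proof (intro sum.cong refl)
    fix k
    have "real (Suc k) = real k + 1"
      by simp
    then show "bernpoly j (real (Suc k)) - bernpoly j (real k) = real j * real k ^ (j - 1)"
      by (simp only: bernpoly_plus_1)
  qed
  finally show ?thesis .
qed

lemma phi_0 [simp]: "phi 0 x = 0"
  by (simp add: phi_def bernpoly_expand[of 0 x])

lemma phi_Suc:
  "phi (Suc j) x = (\<Sum>i=0..j. real (Suc j choose Suc i) * bernoulli (j - i) * x ^ Suc i)"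
proof -
  have "bernpoly (Suc j) x
      = bernoulli (Suc j) + (\<Sum>i=0..j. real (Suc j choose Suc i) * bernoulli (j - i) * x ^ Suc i)"
    unfolding bernpoly_expand[of "Suc j" x] by (subst sum.atLeast0_atMost_Suc_shift) simp
  then show ?thesis
    by (simp add: phi_def)
qed

section \<open>Sums of Bernoulli numbers against \<open>\<phi>\<^sub>j\<close>\<close>

definition bernoulli_phi_sum :: "nat \<Rightarrow> real \<Rightarrow> real \<Rightarrow> real \<Rightarrow> real" where
  "bernoulli_phi_sum m y w x = (\<Sum>j=0..m. real (m choose j) * y powi (int m - int j - 1)
      * bernoulli (m - j) * w powi (int j - 1) * phi j x)"

lemma bernpoly_scaled_eq_sum:
  fixes y w z :: real
  assumes "y \<noteq> 0"
  shows "real (Suc (Suc q)) * y ^ q * bernpoly (Suc q) (z * w / y)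
    = (\<Sum>j=0..Suc (Suc q). real (Suc (Suc q) choose j) * y powi (int (Suc (Suc q)) - int j - 1)
        * bernoulli (Suc (Suc q) - j) * w powi (int j - 1) * (real j * z ^ (j - 1)))"
    (is "_ = (\<Sum>j=0..Suc (Suc q). ?g j)")
proof -
  have summand: "real (Suc (Suc q)) * y ^ q
      * (real (Suc q choose i) * bernoulli (Suc q - i) * (z * w / y) ^ i) = ?g (Suc i)" for i
  proof -
    have binom: "real (Suc (Suc q) choose Suc i) * real (Suc i)
        = real (Suc (Suc q)) * real (Suc q choose i)"
      using Suc_times_binomial[of i "Suc q"] by (metis of_nat_mult mult.commute)
    have pow: "y powi (int (Suc (Suc q)) - int (Suc i) - 1) = y ^ q / y ^ i"
      using assms by (simp add: power_int_diff)
    have wpow: "w powi (int (Suc i) - 1) = w ^ i"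
      by simp
    have "?g (Suc i) = (real (Suc (Suc q) choose Suc i) * real (Suc i))
        * y powi (int (Suc (Suc q)) - int (Suc i) - 1) * bernoulli (Suc q - i) * (w ^ i * z ^ i)"
      by (simp only: diff_Suc_Suc diff_Suc_1 wpow ac_simps)
    also have "\<dots> = real (Suc (Suc q)) * y ^ q
        * (real (Suc q choose i) * bernoulli (Suc q - i) * (z * w / y) ^ i)"
      unfolding binom pow by (simp add: power_mult_distrib power_divide ac_simps del: of_nat_Suc)
    finally show ?thesis ..
  qed
  have "real (Suc (Suc q)) * y ^ q * bernpoly (Suc q) (z * w / y) = (\<Sum>i=0..Suc q. ?g (Suc i))"
    by (simp only: bernpoly_expand sum_distrib_left summand)
  also have "\<dots> = (\<Sum>j=0..Suc (Suc q). ?g j)"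
    by (simp only: sum.atLeast0_atMost_Suc_shift[of ?g]) simp
  finally show ?thesis .
qed

lemma bernoulli_phi_sum_of_nat:
  assumes "y \<noteq> 0"
  shows "bernoulli_phi_sum (Suc (Suc q)) y w (real M)
    = real (Suc (Suc q)) * y ^ q * (\<Sum>k<M. bernpoly (Suc q) (real k * w / y))"
  unfolding bernoulli_phi_sum_def phi_of_nat sum_distrib_left bernpoly_scaled_eq_sum[OF assms]
  by (subst sum.swap) (simp only: mult.assoc)

lemma bernoulli_phi_sum_Suc:
  "bernoulli_phi_sum (Suc m) y w x = (\<Sum>j=0..m. \<Sum>i=0..j.
      real ((m + 1) choose (j + 1)) * real ((j + 1) choose (i + 1))
      * y powi (int m - int j - 1) * bernoulli (m - j) * bernoulli (j - i)
      * w ^ j * x ^ (i + 1))"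
proof -
  have "int (Suc m) - int (Suc j) - 1 = int m - int j - 1" "w powi (int (Suc j) - 1) = w ^ j" for j
    by simp_all
  then have "bernoulli_phi_sum (Suc m) y w x = (\<Sum>j=0..m. real (Suc m choose Suc j)
      * y powi (int m - int j - 1) * bernoulli (m - j) * w ^ j * phi (Suc j) x)"
    unfolding bernoulli_phi_sum_def
    by (simp only: sum.atLeast0_atMost_Suc_shift o_def phi_0 mult_zero_right add_0 diff_Suc_Suc)
  also have "\<dots> = (\<Sum>j=0..m. \<Sum>i=0..j.
      real ((m + 1) choose (j + 1)) * real ((j + 1) choose (i + 1))
      * y powi (int m - int j - 1) * bernoulli (m - j) * bernoulli (j - i)
      * w ^ j * x ^ (i + 1))"
    unfolding phi_Suc sum_distrib_left by (simp only: Suc_eq_plus1 ac_simps)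
  finally show ?thesis .
qed

lemma bernoulli_phi_sum_of_nat_uminus:
  assumes "y \<noteq> 0"
  shows "bernoulli_phi_sum (Suc (Suc q)) (- y) w (real M)
    = - (real (Suc (Suc q)) * y ^ q * (\<Sum>k<M. bernpoly (Suc q) (real k * w / y + 1)))"
proof -
  have reflect: "bernpoly (Suc q) (real k * w / - y)
      = (-1) ^ Suc q * bernpoly (Suc q) (real k * w / y + 1)" for k
    using bernpoly_uminus[of "Suc q" "real k * w / y"] by simp
  have sign: "(- y) ^ q * (-1) ^ Suc q = - (y ^ q)"
    by (induction q) (simp_all add: algebra_simps)
  have "bernoulli_phi_sum (Suc (Suc q)) (- y) w (real M)
      = real (Suc (Suc q)) * (- y) ^ q * (\<Sum>k<M. bernpoly (Suc q) (real k * w / - y))"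
    using assms by (intro bernoulli_phi_sum_of_nat) simp
  also have "\<dots> = real (Suc (Suc q)) * ((- y) ^ q * (-1) ^ Suc q)
      * (\<Sum>k<M. bernpoly (Suc q) (real k * w / y + 1))"
    by (simp only: reflect mult.assoc flip: sum_distrib_left)
  also have "\<dots> = - (real (Suc (Suc q)) * y ^ q * (\<Sum>k<M. bernpoly (Suc q) (real k * w / y + 1)))"
    by (simp only: sign mult_minus_left mult_minus_right)
  finally show ?thesis .
qed

section \<open>Representable numbers as layers\<close>

text \<open>The sums of exactly \<open>k\<close> generators \<open>a + i d\<close>, written \<open>k a + t d\<close> with \<open>t \<le> k s\<close>.\<close>
definition layer :: "nat \<Rightarrow> nat \<Rightarrow> nat \<Rightarrow> nat \<Rightarrow> nat set" where
  "layer a d s k = (\<lambda>t. k * a + t * d) ` {..k * s}"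

definition class_below :: "nat \<Rightarrow> nat \<Rightarrow> nat \<Rightarrow> nat set" where
  "class_below a d k = (\<lambda>t. k * a mod d + t * d) ` {..<k * a div d}"

lemma layer_representable:
  fixes a d s k t :: nat
  assumes "t \<le> k * s"
  shows "\<exists>x. k * a + t * d = (\<Sum>i\<le>s. (a + i * d) * x i)"
  using assms
proof (induction k arbitrary: t)
  case 0
  then show ?case
    by (intro exI[of _ "\<lambda>_. 0"]) simp
next
  case (Suc k)
  define i where "i = min t s"
  have "t - i \<le> k * s"
    using Suc.prems by (auto simp: i_def)
  with Suc.IH obtain x where x: "k * a + (t - i) * d = (\<Sum>l\<le>s. (a + l * d) * x l)"
    by blast
  have "i \<le> t" and "i \<le> s"
    by (simp_all add: i_def)
  then have "Suc k * a + t * d = (a + i * d) + (k * a + (t - i) * d)"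
    by (auto simp: algebra_simps dest!: le_Suc_ex)
  also have "\<dots> = (\<Sum>l\<le>s. (a + l * d) * (x l + of_bool (l = i)))"
    using \<open>i \<le> s\<close> by (simp add: x distrib_left sum.distrib)
  finally show ?case
    by fast
qed

lemma representable_iff_mem_layer:
  fixes a d s n :: nat
  assumes "1 \<le> s"
  shows "(\<exists>x. n = (\<Sum>i\<le>s. (a + i * d) * x i)) \<longleftrightarrow> (\<exists>k. n \<in> layer a d s k)"
proof
  assume "\<exists>x. n = (\<Sum>i\<le>s. (a + i * d) * x i)"
  then obtain x where x: "n = (\<Sum>i\<le>s. (a + i * d) * x i)"
    by blast
  have "n = (\<Sum>i\<le>s. x i) * a + (\<Sum>i\<le>s. i * x i) * d"
    by (simp add: x algebra_simps sum.distrib sum_distrib_left sum_distrib_right)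
  moreover have "(\<Sum>i\<le>s. i * x i) \<le> (\<Sum>i\<le>s. x i) * s"
    unfolding sum_distrib_right by (intro sum_mono) (simp add: mult.commute)
  ultimately show "\<exists>k. n \<in> layer a d s k"
    unfolding layer_def by blast
next
  assume "\<exists>k. n \<in> layer a d s k"
  then show "\<exists>x. n = (\<Sum>i\<le>s. (a + i * d) * x i)"
    unfolding layer_def using layer_representable by blast
qed

lemma mem_NR_iff:
  assumes "1 \<le> s"
  shows "n \<in> NR a d s \<longleftrightarrow> 0 < n \<and> (\<forall>k. n \<notin> layer a d s k)"
  using representable_iff_mem_layer[OF assms] by (auto simp: NR_def)

lemma mem_layerD:
  assumes "n \<in> layer a d s k"
  shows "n mod d = k * a mod d" and "k * a \<le> n"
  using assms by (auto simp: layer_def)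

lemma mem_class_below_iff:
  fixes a d k n :: nat
  assumes "0 < d"
  shows "n \<in> class_below a d k \<longleftrightarrow> n < k * a \<and> n mod d = k * a mod d"
proof
  assume "n \<in> class_below a d k"
  then obtain t where "t < k * a div d" and n: "n = k * a mod d + t * d"
    by (auto simp: class_below_def)
  then have "t * d + d \<le> k * a div d * d"
    by (metis Suc_leI mult_Suc mult_le_mono1 add.commute)
  then have "n < k * a"
    using n div_mult_mod_eq[of "k * a" d] mod_less_divisor[OF assms, of "k * a"] by linarith
  then show "n < k * a \<and> n mod d = k * a mod d"
    using n by simp
next
  assume n: "n < k * a \<and> n mod d = k * a mod d"
  then have "n div d < k * a div d"
    by (metis div_le_mono div_mult_mod_eq less_imp_le_nat nat_less_le)
  moreover have "n = k * a mod d + n div d * d"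
    using n div_mult_mod_eq[of n d] by linarith
  ultimately show "n \<in> class_below a d k"
    unfolding class_below_def by (intro image_eqI[of _ _ "n div d"]) auto
qed

lemma coprime_mult_mod_eq_imp_add_le:
  fixes a d i j :: nat
  assumes "coprime a d" and "i * a mod d = j * a mod d" and "i < j"
  shows "i + d \<le> j"
proof -
  have "[i = j] (mod d)"
    using assms(1,2) cong_mult_rcancel_nat[of a d i j] by (simp add: cong_def coprime_commute)
  then have "d dvd j - i"
    using assms(3) by (metis cong_altdef_nat cong_sym less_imp_le)
  then show ?thesis
    using assms(3) by (auto dest: dvd_imp_le)
qed

lemma bij_betw_mult_mod:
  fixes a d N :: nat
  assumes "coprime a d" and "0 < d"
  shows "bij_betw (\<lambda>k. k * a mod d) {N..<N + d} {..<d}"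
proof (rule bij_betw_imageI)
  show inj: "inj_on (\<lambda>k. k * a mod d) {N..<N + d}"
  proof (rule inj_onI)
    fix i j assume "i \<in> {N..<N + d}" "j \<in> {N..<N + d}" "i * a mod d = j * a mod d"
    then show "i = j"
      using coprime_mult_mod_eq_imp_add_le[OF assms(1)] by (metis atLeastLessThan_iff
          add_le_cancel_right linorder_neqE_nat not_less order.trans)
  qed
  show "(\<lambda>k. k * a mod d) ` {N..<N + d} = {..<d}"
    using assms(2) by (intro card_subset_eq) (auto simp: card_image[OF inj])
qed

lemma residue_representative:
  fixes a d N n :: nat
  assumes "coprime a d" and "0 < d"
  obtains k where "k \<in> {N..<N + d}" and "k * a mod d = n mod d"
proof -
  have "n mod d \<in> (\<lambda>k. k * a mod d) ` {N..<N + d}"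
    using bij_betw_imp_surj_on[OF bij_betw_mult_mod[OF assms]] assms(2) by simp
  then show ?thesis
    using that by force
qed

lemma sum_power_class_below:
  assumes "0 < d"
  shows "real (Suc q) * (\<Sum>n\<in>class_below a d k. real n ^ q) = real d ^ q
    * (bernpoly (Suc q) (real k * real a / real d) - bernpoly (Suc q) (real (k * a mod d) / real d))"
proof -
  have "inj_on (\<lambda>t. k * a mod d + t * d) {..<k * a div d}"
    using assms by (auto simp: inj_on_def)
  then have "real (Suc q) * (\<Sum>n\<in>class_below a d k. real n ^ q)
      = real (Suc q) * (\<Sum>t<k * a div d. (real (k * a mod d) + real t * real d) ^ q)"
    by (simp add: class_below_def sum.reindex)
  also have "\<dots> = real d ^ q * (bernpoly (Suc q) (real (k * a mod d) / real d + real (k * a div d))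
      - bernpoly (Suc q) (real (k * a mod d) / real d))"
    using assms by (intro sum_power_arith_progression) simp
  also have "real (k * a mod d) / real d + real (k * a div d) = real k * real a / real d"
  proof -
    have "real (k * a) = real (k * a div d) * real d + real (k * a mod d)"
      by (metis div_mult_mod_eq of_nat_add of_nat_mult)
    then show ?thesis
      using assms by (simp add: field_simps)
  qed
  finally show ?thesis .
qed

lemma sum_power_layer:
  assumes "0 < d"
  shows "real (Suc q) * (\<Sum>n\<in>layer a d s k. real n ^ q) = real d ^ q
    * (bernpoly (Suc q) (real k * real (a + s * d) / real d + 1)
      - bernpoly (Suc q) (real k * real a / real d))"
proof -
  have "inj_on (\<lambda>t. k * a + t * d) {..k * s}"
    using assms by (auto simp: inj_on_def)
  then have "real (Suc q) * (\<Sum>n\<in>layer a d s k. real n ^ q)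
      = real (Suc q) * (\<Sum>t<Suc (k * s). (real k * real a + real t * real d) ^ q)"
    by (simp only: layer_def sum.reindex lessThan_Suc_atMost o_def of_nat_add of_nat_mult)
  also have "\<dots> = real d ^ q * (bernpoly (Suc q) (real k * real a / real d + real (Suc (k * s)))
      - bernpoly (Suc q) (real k * real a / real d))"
    using assms by (intro sum_power_arith_progression) simp
  also have "real k * real a / real d + real (Suc (k * s)) = real k * real (a + s * d) / real d + 1"
    using assms by (simp add: field_simps)
  finally show ?thesis .
qed

section \<open>Power sums over the non-representable numbers\<close>

context
  fixes a d s N :: nat
  assumes a_pos: "0 < a" and d_pos: "0 < d" and coprime: "coprime a d" and s_pos: "1 \<le> s"
    and N_ge: "a \<le> N * s + 1" and N_least: "\<And>k. k < N \<Longrightarrow> k * s + 1 < a"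
begin

lemma mem_layer_below_N:
  assumes "k < N" and "n \<in> layer a d s k"
  shows "n < (k + d) * a"
proof -
  obtain t where "t \<le> k * s" and n: "n = k * a + t * d"
    using assms(2) by (auto simp: layer_def)
  then have "t < a"
    using N_least[OF assms(1)] by linarith
  then have "t * d < a * d"
    using d_pos by simp
  then show ?thesis
    using n by (simp add: algebra_simps)
qed

lemma layer_subset_class_below:
  assumes "k < N"
  shows "layer a d s k \<subseteq> (\<Union>k'\<in>{N..<N + d}. class_below a d k')"
proof
  fix n assume n: "n \<in> layer a d s k"
  obtain k' where k': "k' \<in> {N..<N + d}" "k' * a mod d = n mod d"
    using residue_representative[OF coprime d_pos] by blast
  have "k + d \<le> k'"
    using coprime_mult_mod_eq_imp_add_le[OF coprime, of k k'] k' assms mem_layerD(1)[OF n] by auto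
  then have "n < k' * a"
    using mem_layer_below_N[OF assms n] by (meson less_le_trans mult_le_mono1)
  then show "n \<in> (\<Union>k'\<in>{N..<N + d}. class_below a d k')"
    using k' by (auto simp: mem_class_below_iff[OF d_pos])
qed

lemma layers_disjoint:
  assumes "i < j" and "j < N"
  shows "layer a d s i \<inter> layer a d s j = {}"
proof (rule ccontr)
  assume "layer a d s i \<inter> layer a d s j \<noteq> {}"
  then obtain n where i: "n \<in> layer a d s i" and j: "n \<in> layer a d s j"
    by blast
  have "i + d \<le> j"
    using coprime_mult_mod_eq_imp_add_le[OF coprime _ assms(1)] mem_layerD(1)[OF i] mem_layerD(1)[OF j]
    by simp
  then have "(i + d) * a \<le> n"
    using mem_layerD(2)[OF j] by (meson le_trans mult_le_mono1)
  then show False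
    using mem_layer_below_N[OF _ i] assms by simp
qed

lemma mem_layer_if_above:
  assumes "N \<le> k" and "k * a \<le> n" and "n mod d = k * a mod d"
  shows "\<exists>k'. n \<in> layer a d s k'"
proof -
  obtain t where t: "n = k * a + d * t"
    using assms(2,3) by (metis mod_eq_dvd_iff_nat dvdE le_add_diff_inverse)
  obtain q r where qr: "t = q * a + r" and "r < a"
    using div_mult_mod_eq[of t a] mod_less_divisor[OF a_pos] by metis
  have "r \<le> (k + q * d) * s"
    using \<open>r < a\<close> N_ge assms(1) mult_le_mono1[of N "k + q * d" s] by linarith
  moreover have "n = (k + q * d) * a + r * d"
    by (simp add: t qr algebra_simps)
  ultimately have "n \<in> layer a d s (k + q * d)"
    unfolding layer_def by (intro image_eqI[of _ _ r]) auto
  then show ?thesis ..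
qed

lemma NR_eq_classes_minus_layers:
  "NR a d s = (\<Union>k\<in>{N..<N + d}. class_below a d k) - (\<Union>k<N. layer a d s k)"
proof (intro equalityI subsetI)
  fix n assume "n \<in> NR a d s"
  then have not_layer: "\<And>k. n \<notin> layer a d s k"
    by (simp add: mem_NR_iff[OF s_pos])
  obtain k where k: "k \<in> {N..<N + d}" "k * a mod d = n mod d"
    using residue_representative[OF coprime d_pos] by blast
  then have "n < k * a"
    using mem_layer_if_above[of k n] not_layer by force
  with k not_layer show "n \<in> (\<Union>k\<in>{N..<N + d}. class_below a d k) - (\<Union>k<N. layer a d s k)"
    by (auto simp: mem_class_below_iff[OF d_pos])
next
  fix n assume "n \<in> (\<Union>k\<in>{N..<N + d}. class_below a d k) - (\<Union>k<N. layer a d s k)"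
  then obtain k where k: "k \<in> {N..<N + d}" "n < k * a" "n mod d = k * a mod d"
    and low: "\<And>k'. k' < N \<Longrightarrow> n \<notin> layer a d s k'"
    by (auto simp: mem_class_below_iff[OF d_pos])
  have not_layer: "n \<notin> layer a d s k'" for k'
  proof
    assume n: "n \<in> layer a d s k'"
    then have "k' < k"
      using mem_layerD(2)[OF n] k(2) by (meson le_less_trans mult_less_cancel2)
    then have "k' + d \<le> k"
      using coprime_mult_mod_eq_imp_add_le[OF coprime] mem_layerD(1)[OF n] k(3) by simp
    with k(1) low[of k'] n show False
      by simp
  qed
  moreover have "0 \<in> layer a d s 0"
    by (simp add: layer_def)
  ultimately show "n \<in> NR a d s"
    by (metis mem_NR_iff[OF s_pos] gr0I)
qed

lemma sum_NR:
  fixes f :: "nat \<Rightarrow> 'a :: ab_group_add"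
  shows "sum f (NR a d s)
    = (\<Sum>k\<in>{N..<N + d}. sum f (class_below a d k)) - (\<Sum>k<N. sum f (layer a d s k))"
proof -
  have fin: "finite (class_below a d k)" "finite (layer a d s k)" for k
    by (simp_all add: class_below_def layer_def)
  have "class_below a d i \<inter> class_below a d j = {}"
    if "i \<in> {N..<N + d}" "j \<in> {N..<N + d}" "i \<noteq> j" for i j
    using that bij_betw_mult_mod[OF coprime d_pos, of N]
    by (auto simp: mem_class_below_iff[OF d_pos] bij_betw_def inj_on_def)
  then have classes: "sum f (\<Union>k\<in>{N..<N + d}. class_below a d k)
      = (\<Sum>k\<in>{N..<N + d}. sum f (class_below a d k))"
    by (intro sum.UNION_disjoint) (auto simp: fin)
  have "layer a d s i \<inter> layer a d s j = {}" if "i < N" "j < N" "i \<noteq> j" for i j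
    using that layers_disjoint by (metis inf_commute linorder_neqE_nat)
  then have layers: "sum f (\<Union>k<N. layer a d s k) = (\<Sum>k<N. sum f (layer a d s k))"
    by (intro sum.UNION_disjoint) (auto simp: fin)
  have "(\<Union>k<N. layer a d s k) \<subseteq> (\<Union>k\<in>{N..<N + d}. class_below a d k)"
    using layer_subset_class_below by blast
  then show ?thesis
    by (simp add: NR_eq_classes_minus_layers sum_diff fin classes layers)
qed

lemma Ssum_eq_bernpoly_sums:
  "real (Suc q) * Ssum a d s q
    = real d ^ q * ((\<Sum>k<N + d. bernpoly (Suc q) (real k * real a / real d))
      - (\<Sum>k<N. bernpoly (Suc q) (real k * real (a + s * d) / real d + 1))) - bernoulli (Suc q)"
proof -
  let ?B = "bernpoly (Suc q)"
  have "real (Suc q) * Ssum a d s q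
      = (\<Sum>k\<in>{N..<N + d}. real (Suc q) * (\<Sum>n\<in>class_below a d k. real n ^ q))
      - (\<Sum>k<N. real (Suc q) * (\<Sum>n\<in>layer a d s k. real n ^ q))"
    by (simp only: Ssum_def sum_NR sum_distrib_left right_diff_distrib)
  also have "\<dots> = (\<Sum>k\<in>{N..<N + d}. real d ^ q
        * (?B (real k * real a / real d) - ?B (real (k * a mod d) / real d)))
      - (\<Sum>k<N. real d ^ q
        * (?B (real k * real (a + s * d) / real d + 1) - ?B (real k * real a / real d)))"
    by (simp only: sum_power_class_below[OF d_pos] sum_power_layer[OF d_pos])
  also have "\<dots> = real d ^ q * ((\<Sum>k<N. ?B (real k * real a / real d))
      + (\<Sum>k\<in>{N..<N + d}. ?B (real k * real a / real d))
      - (\<Sum>k<N. ?B (real k * real (a + s * d) / real d + 1)))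
      - real d ^ q * (\<Sum>k\<in>{N..<N + d}. ?B (real (k * a mod d) / real d))"
    by (simp add: sum_subtractf sum_distrib_left algebra_simps)
  also have "(\<Sum>k<N. ?B (real k * real a / real d)) + (\<Sum>k\<in>{N..<N + d}. ?B (real k * real a / real d))
      = (\<Sum>k<N + d. ?B (real k * real a / real d))"
    by (simp add: atLeast0LessThan[symmetric] sum.atLeastLessThan_concat)
  also have "(\<Sum>k\<in>{N..<N + d}. ?B (real (k * a mod d) / real d)) = (\<Sum>r<d. ?B (real r / real d))"
    using sum.reindex_bij_betw[OF bij_betw_mult_mod[OF coprime d_pos, of N],
        of "\<lambda>r. ?B (real r / real d)"]
    by simp
  also have "real d ^ q * (\<Sum>r<d. ?B (real r / real d)) = bernoulli (Suc q)"
    using d_pos by (simp add: bernpoly_multiplication field_simps)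
  finally show ?thesis .
qed

lemma NR_power_sum_phi_identity:
  assumes "2 \<le> m"
  shows "real m * (real m - 1) * Ssum a d s (m - 2)
    = bernoulli_phi_sum m (real d) (real a) (real (N + d))
      + bernoulli_phi_sum m (- real d) (real (a + s * d)) (real N) - real m * bernoulli (m - 1)"
proof -
  define q where "q = m - 2"
  have m: "m = Suc (Suc q)"
    using assms by (simp add: q_def)
  have d: "real d \<noteq> 0"
    using d_pos by simp
  have "real (Suc (Suc q)) - 1 = real (Suc q)"
    by simp
  then have "real m * (real m - 1) * Ssum a d s (m - 2)
      = real m * (real d ^ q * ((\<Sum>k<N + d. bernpoly (Suc q) (real k * real a / real d))
        - (\<Sum>k<N. bernpoly (Suc q) (real k * real (a + s * d) / real d + 1))) - bernoulli (Suc q))"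
    unfolding m by (simp only: diff_Suc_Suc diff_zero numeral_2_eq_2 mult.assoc Ssum_eq_bernpoly_sums)
  then show ?thesis
    unfolding m bernoulli_phi_sum_of_nat[OF d] bernoulli_phi_sum_of_nat_uminus[OF d]
    by (simp add: algebra_simps)
qed

lemma NR_power_sum_phi_formula:
  assumes "1 \<le> m"
  shows "Ssum a d s (m - 1)
    = 1 / (real m * (real m + 1)) * bernoulli_phi_sum (Suc m) (real d) (real a) (real (N + d))
      + 1 / (real m * (real m + 1)) * bernoulli_phi_sum (Suc m) (- real d) (real (a + s * d)) (real N)
      - 1 / real m * bernoulli m"
proof -
  let ?R1 = "bernoulli_phi_sum (Suc m) (real d) (real a) (real (N + d))"
  let ?R2 = "bernoulli_phi_sum (Suc m) (- real d) (real (a + s * d)) (real N)"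
  have "real m * (real m + 1) * Ssum a d s (m - 1) = ?R1 + ?R2 - (real m + 1) * bernoulli m"
    using NR_power_sum_phi_identity[of "Suc m"] assms by (simp add: algebra_simps)
  then have "Ssum a d s (m - 1) = (?R1 + ?R2 - (real m + 1) * bernoulli m) / (real m * (real m + 1))"
    using assms by (simp add: eq_divide_eq mult.commute)
  then show ?thesis
    using assms by (simp add: diff_divide_distrib add_divide_distrib)
qed

end

lemma nat_ceiling_div_least:
  fixes a s k :: nat
  assumes "1 \<le> s"
  defines "N \<equiv> nat \<lceil>(real a - 1) / real s\<rceil>"
  shows "a \<le> N * s + 1" and "k < N \<Longrightarrow> k * s + 1 < a"
proof -
  have "(real a - 1) / real s \<le> real N"
    unfolding N_def by linarith
  then show "a \<le> N * s + 1"
    using assms(1) by (simp add: divide_le_eq flip: of_nat_mult)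
  assume "k < N"
  then have "real k < (real a - 1) / real s"
    unfolding N_def by (simp add: less_ceiling_iff zless_nat_eq_int_zless)
  then show "k * s + 1 < a"
    using assms(1) by (simp add: less_divide_eq flip: of_nat_mult)
qed

theorem mainTheorem5:
  fixes a d s :: nat
  assumes "a \<ge> 2" and "d \<ge> 1" and "coprime a d" and "1 \<le> s" and "s < a"
  defines "b \<equiv> a + s * d"
  defines "cb \<equiv> \<lceil>(real b - 1) / real s\<rceil>"
  defines "ca \<equiv> \<lceil>(real a - 1) / real s\<rceil>"
  shows "(\<forall>m::nat. m \<ge> 2 \<longrightarrow>
      real m * (real m - 1) * Ssum a d s (m - 2) =
        (\<Sum>j=0..m. real (m choose j) * real d powi (int m - int j - 1) * bernoulli (m - j)
            * real a powi (int j - 1) * phi j (real_of_int cb))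
      + (\<Sum>j=0..m. real (m choose j) * (- real d) powi (int m - int j - 1) * bernoulli (m - j)
            * real b powi (int j - 1) * phi j (real_of_int ca))
      - real m * bernoulli (m - 1)) \<and>
    (\<forall>m::nat. m \<ge> 1 \<longrightarrow>
      Ssum a d s (m - 1) =
        1 / (real m * (real m + 1)) * (\<Sum>j=0..m. \<Sum>i=0..j.
            real ((m + 1) choose (j + 1)) * real ((j + 1) choose (i + 1))
            * real d powi (int m - int j - 1) * bernoulli (m - j) * bernoulli (j - i)
            * real a ^ j * real_of_int cb ^ (i + 1))
      + 1 / (real m * (real m + 1)) * (\<Sum>j=0..m. \<Sum>i=0..j.
            real ((m + 1) choose (j + 1)) * real ((j + 1) choose (i + 1))
            * (- real d) powi (int m - int j - 1) * bernoulli (m - j) * bernoulli (j - i)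
            * real b ^ j * real_of_int ca ^ (i + 1))
      - 1 / real m * bernoulli m)"
proof -
  define N where "N = nat ca"
  have ca_N: "real_of_int ca = real N"
    using assms(1) by (simp add: N_def ca_def)
  have "(real b - 1) / real s = (real a - 1) / real s + of_int (int d)"
    using assms(4) by (simp add: b_def field_simps)
  then have cb_N: "real_of_int cb = real (N + d)"
    using ca_N unfolding ca_def cb_def by (simp only: ceiling_add_of_int)
  have "0 < a" "0 < d" "a \<le> N * s + 1" "\<And>k. k < N \<Longrightarrow> k * s + 1 < a"
    using assms(1,2) nat_ceiling_div_least[where a = a, OF assms(4)] by (simp_all add: N_def ca_def)
  note identity = NR_power_sum_phi_identity[OF this(1,2) assms(3,4) this(3,4)]
    and formula = NR_power_sum_phi_formula[OF this(1,2) assms(3,4) this(3,4)]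
  show ?thesis
    unfolding ca_N cb_N bernoulli_phi_sum_Suc[symmetric] bernoulli_phi_sum_def[symmetric] b_def
    using identity formula by blast
qed

end
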